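(* Let $3\le k\le n-1$ and let $T$ be a tree attaining the maximum value of $M_2$ over $\mathcal{CT}_{n,k}$. If the maximum degree of $T$ is $4$, then the subgraph of $T$ induced by the vertices of degree $4$ is a tree.
   Context: A chemical tree is a tree with maximum degree at most $4$. A segment of a tree is a path of positive length neither of whose end vertices has degree $2$ and all of whose internal vertices have degree $2$. $\mathcal{CT}_{n,k}$ is the class of all $n$-vertex chemical trees with exactly $k$ segments. $M_2(G)=\sum_{uv\in E(G)}d_ud_v$, where $d_v$ is the degree of $v$. *)

theory Defs
  imports Main
begin

definition simple_graph :: "'a set \<Rightarrow> 'a set set \<Rightarrow> bool" where
  "simple_graph V E \<longleftrightarrow> finite V \<and> (\<forall>e\<in>E. \<exists>u v. e = {u, v} \<and> u \<noteq> v \<and> u \<in> V \<and> v \<in> V)"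

definition deg :: "'a set \<Rightarrow> 'a set set \<Rightarrow> 'a \<Rightarrow> nat" where
  "deg V E v = card {u \<in> V. {u, v} \<in> E}"

definition max_degree :: "'a set \<Rightarrow> 'a set set \<Rightarrow> nat" where
  "max_degree V E = Max (deg V E ` V)"

definition connected_graph :: "'a set \<Rightarrow> 'a set set \<Rightarrow> bool" where
  "connected_graph V E \<longleftrightarrow>
     (\<forall>u\<in>V. \<forall>v\<in>V. (u, v) \<in> {(x, y). {x, y} \<in> E}\<^sup>*)"

definition is_path :: "'a set \<Rightarrow> 'a set set \<Rightarrow> 'a list \<Rightarrow> bool" where
  "is_path V E p \<longleftrightarrow> p \<noteq> [] \<and> distinct p \<and> set p \<subseteq> V \<and>
     (\<forall>i. Suc i < length p \<longrightarrow> {p ! i, p ! Suc i} \<in> E)"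

definition is_cycle :: "'a set \<Rightarrow> 'a set set \<Rightarrow> 'a list \<Rightarrow> bool" where
  "is_cycle V E c \<longleftrightarrow> is_path V E c \<and> length c \<ge> 3 \<and> {last c, hd c} \<in> E"

definition acyclic_graph :: "'a set \<Rightarrow> 'a set set \<Rightarrow> bool" where
  "acyclic_graph V E \<longleftrightarrow> \<not> (\<exists>c. is_cycle V E c)"

definition is_tree :: "'a set \<Rightarrow> 'a set set \<Rightarrow> bool" where
  "is_tree V E \<longleftrightarrow> simple_graph V E \<and> V \<noteq> {} \<and> connected_graph V E \<and> acyclic_graph V E"

definition chemical_tree :: "'a set \<Rightarrow> 'a set set \<Rightarrow> bool" where
  "chemical_tree V E \<longleftrightarrow> is_tree V E \<and> (\<forall>v\<in>V. deg V E v \<le> 4)"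

definition path_edges :: "'a list \<Rightarrow> 'a set set" where
  "path_edges p = {{p ! i, p ! Suc i} | i. Suc i < length p}"

definition is_segment :: "'a set \<Rightarrow> 'a set set \<Rightarrow> 'a list \<Rightarrow> bool" where
  "is_segment V E p \<longleftrightarrow> is_path V E p \<and> length p \<ge> 2 \<and>
     deg V E (hd p) \<noteq> 2 \<and> deg V E (last p) \<noteq> 2 \<and>
     (\<forall>i. 0 < i \<and> i < length p - 1 \<longrightarrow> deg V E (p ! i) = 2)"

text \<open>Segments as subgraphs (a path and its reversal give the same segment).\<close>
definition segments :: "'a set \<Rightarrow> 'a set set \<Rightarrow> 'a set set set" where
  "segments V E = {path_edges p | p. is_segment V E p}"

definition num_segments :: "'a set \<Rightarrow> 'a set set \<Rightarrow> nat" where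
  "num_segments V E = card (segments V E)"

text \<open>CT_{n,k}: chemical trees on n vertices with exactly k segments
  (vertices taken from nat; the class is closed under isomorphism).\<close>
definition CT :: "nat \<Rightarrow> nat \<Rightarrow> (nat set \<times> nat set set) set" where
  "CT n k = {(V, E). chemical_tree V E \<and> card V = n \<and> num_segments V E = k}"

definition M2 :: "'a set \<Rightarrow> 'a set set \<Rightarrow> nat" where
  "M2 V E = (\<Sum>e\<in>E. \<Prod>v\<in>e. deg V E v)"

end

(*
  Suppose the vertices of degree 4 of an M2-maximal tree T do not induce a connected subgraph,
  and take a longest path p of T whose ends have degree 4 but lie in different components of
  that subgraph. Along p there is an edge ab with d(a) = 4 > d(b); at the end v of p maximality
  gives a neighbour y of v off p with d(y) < 4. Replacing the edges ab, vy by av, by yields again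
  a chemical tree with the same degrees, hence with the same number of segments (twice it is the
  sum of the degrees different from 2), while M2 grows by (4 - d(b)) (4 - d(y)) > 0.
*)

theory Submission
  imports Defs
begin

section \<open>Reachability, paths and cycles\<close>

definition adj :: "'a set set \<Rightarrow> ('a \<times> 'a) set" where
  "adj E = {(x, y). {x, y} \<in> E}"

lemma connected_graph_iff_adj:
  "connected_graph V E \<longleftrightarrow> (\<forall>u\<in>V. \<forall>v\<in>V. (u, v) \<in> (adj E)\<^sup>*)"
  by (simp add: connected_graph_def adj_def)

lemma reachable_sym:
  assumes "(x, y) \<in> (adj E)\<^sup>*"
  shows "(y, x) \<in> (adj E)\<^sup>*"
proof -
  have "sym (adj E)" by (auto simp: adj_def sym_def insert_commute)
  then show ?thesis using assms by (meson sym_rtrancl symD)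
qed

lemma reachable_mono:
  assumes "G \<subseteq> H" and "(x, y) \<in> (adj G)\<^sup>*"
  shows "(x, y) \<in> (adj H)\<^sup>*"
proof -
  have "adj G \<subseteq> adj H" using assms(1) by (auto simp: adj_def)
  then show ?thesis using assms(2) rtrancl_mono by blast
qed

lemma reachable_if_edges_reachable:
  assumes "\<And>p q. {p, q} \<in> G \<Longrightarrow> (p, q) \<in> (adj H)\<^sup>*" and "(x, y) \<in> (adj G)\<^sup>*"
  shows "(x, y) \<in> (adj H)\<^sup>*"
proof -
  have "adj G \<subseteq> (adj H)\<^sup>*" using assms(1) by (auto simp: adj_def)
  then show ?thesis using assms(2) by (metis rtrancl_subset_rtrancl subsetD)
qed

lemma reachable_along_path:
  assumes "\<And>k. i \<le> k \<Longrightarrow> k < j \<Longrightarrow> {p ! k, p ! Suc k} \<in> G" and "i \<le> j"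
  shows "(p ! i, p ! j) \<in> (adj G)\<^sup>*"
  using assms
proof (induction j)
  case (Suc j)
  show ?case
  proof (cases "i = Suc j")
    case False
    then have "(p ! i, p ! j) \<in> (adj G)\<^sup>*" using Suc by auto
    moreover have "(p ! j, p ! Suc j) \<in> adj G" using Suc.prems False by (auto simp: adj_def)
    ultimately show ?thesis by (rule rtrancl_into_rtrancl)
  qed simp
qed simp

lemma simple_graph_edgeD: "simple_graph V E \<Longrightarrow> {x, y} \<in> E \<Longrightarrow> x \<noteq> y \<and> x \<in> V \<and> y \<in> V"
  unfolding simple_graph_def by (metis doubleton_eq_iff)

lemma simple_graph_finite_edges:
  assumes "simple_graph V E"
  shows "finite E"
proof -
  have "E \<subseteq> Pow V" using assms unfolding simple_graph_def by fastforce
  moreover have "finite V" using assms by (simp add: simple_graph_def)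
  ultimately show ?thesis by (meson finite_Pow_iff finite_subset)
qed

lemma simple_graph_induced:
  assumes "simple_graph V E" and "S \<subseteq> V"
  shows "simple_graph S {e \<in> E. e \<subseteq> S}"
  unfolding simple_graph_def
proof (intro conjI ballI)
  show "finite S" using assms finite_subset by (auto simp: simple_graph_def)
next
  fix e assume e: "e \<in> {e \<in> E. e \<subseteq> S}"
  then obtain u v where "e = {u, v}" "u \<noteq> v" using assms(1) by (auto simp: simple_graph_def)
  then show "\<exists>u v. e = {u, v} \<and> u \<noteq> v \<and> u \<in> S \<and> v \<in> S" using e by blast
qed

lemma is_path_mono: "is_path V G p \<Longrightarrow> G \<subseteq> H \<Longrightarrow> V \<subseteq> W \<Longrightarrow> is_path W H p"
  unfolding is_path_def by auto

lemma is_path_edge: "is_path V E p \<Longrightarrow> Suc i < length p \<Longrightarrow> {p ! i, p ! Suc i} \<in> E"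
  unfolding is_path_def by blast

lemma is_path_nth_mem: "is_path V E p \<Longrightarrow> i < length p \<Longrightarrow> p ! i \<in> V"
  unfolding is_path_def by (meson nth_mem subsetD)

lemma is_path_distinct: "is_path V E p \<Longrightarrow> distinct p"
  unfolding is_path_def by blast

lemma length_path_le_card: "is_path V E p \<Longrightarrow> finite V \<Longrightarrow> length p \<le> card V"
  unfolding is_path_def by (metis card_mono distinct_card)

lemma is_path_take: "is_path V E p \<Longrightarrow> 0 < i \<Longrightarrow> is_path V E (take i p)"
  unfolding is_path_def by (simp add: subset_trans[OF set_take_subset])

lemma is_path_drop: "is_path V E p \<Longrightarrow> j < length p \<Longrightarrow> is_path V E (drop j p)"
  unfolding is_path_def by (simp add: subset_trans[OF set_drop_subset] add.commute)

lemma is_path_snoc: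
  assumes "is_path V E p" "t \<notin> set p" "t \<in> V" "{last p, t} \<in> E"
  shows "is_path V E (p @ [t])"
  unfolding is_path_def
proof (intro conjI allI impI)
  fix i assume i: "Suc i < length (p @ [t])"
  show "{(p @ [t]) ! i, (p @ [t]) ! Suc i} \<in> E"
  proof (cases "Suc i < length p")
    case True then show ?thesis using assms(1) by (simp add: nth_append is_path_def)
  next
    case False
    then have "i = length p - 1" using i by simp
    then show ?thesis using assms by (simp add: nth_append last_conv_nth is_path_def)
  qed
qed (use assms in \<open>auto simp: is_path_def\<close>)

lemma is_path_rev: "is_path V E p \<Longrightarrow> is_path V E (rev p)"
  unfolding is_path_def
proof (intro conjI allI impI)
  fix i
  assume p: "p \<noteq> [] \<and> distinct p \<and> set p \<subseteq> V \<and>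
      (\<forall>i. Suc i < length p \<longrightarrow> {p ! i, p ! Suc i} \<in> E)"
    and i: "Suc i < length (rev p)"
  define j where "j = length p - 2 - i"
  have j: "Suc j < length p" "length p - 1 - i = Suc j" "length p - 1 - Suc i = j"
    using i unfolding j_def by auto
  have "{p ! j, p ! Suc j} \<in> E" using p j(1) by blast
  then show "{rev p ! i, rev p ! Suc i} \<in> E" using i j by (simp add: rev_nth insert_commute)
qed auto

lemma reachable_imp_path:
  assumes sg: "simple_graph V E" and "x \<in> V" and "(x, z) \<in> (adj E)\<^sup>*"
  shows "\<exists>p. is_path V E p \<and> hd p = x \<and> last p = z"
  using assms(3)
proof (induction rule: rtrancl_induct)
  case base
  show ?case using assms(2) by (intro exI[of _ "[x]"]) (auto simp: is_path_def)
next
  case (step w z)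
  then obtain p where p: "is_path V E p" "hd p = x" "last p = w" by blast
  have e: "{w, z} \<in> E" using step(2) by (auto simp: adj_def)
  show ?case
  proof (cases "z \<in> set p")
    case True
    then obtain i where i: "i < length p" "p ! i = z" by (metis in_set_conv_nth)
    have "is_path V E (take (Suc i) p)" using is_path_take p by blast
    moreover have "hd (take (Suc i) p) = x" using p by (simp add: is_path_def)
    moreover have "last (take (Suc i) p) = z" using i by (metis last_snoc take_Suc_conv_app_nth)
    ultimately show ?thesis by blast
  next
    case False
    have "is_path V E (p @ [z])" using is_path_snoc p False e simple_graph_edgeD[OF sg e] by auto
    then show ?thesis using p by (intro exI[of _ "p @ [z]"]) (auto simp: is_path_def)
  qed
qed

lemma maximal_path_exists:
  assumes "finite V" and "P p\<^sub>0" and "\<And>p. P p \<Longrightarrow> is_path V E p"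
  obtains p where "P p" and "\<And>q. P q \<Longrightarrow> length q \<le> length p"
proof -
  have "\<forall>p. P p \<longrightarrow> length p < Suc (card V)"
    using assms(1,3) length_path_le_card less_Suc_eq_le by blast
  with assms(2) show ?thesis using that ex_has_greatest_nat[of P p\<^sub>0 length "Suc (card V)"] by blast
qed

lemma acyclic_graph_subgraph:
  "acyclic_graph V E \<Longrightarrow> W \<subseteq> V \<Longrightarrow> G \<subseteq> E \<Longrightarrow> acyclic_graph W G"
  unfolding acyclic_graph_def is_cycle_def using is_path_mono by blast

lemma is_cycle_rotate1:
  assumes "is_cycle V E c"
  shows "is_cycle V E (rotate1 c)"
proof (cases c)
  case (Cons x xs)
  have c: "is_path V E c" "length c \<ge> 3" "{last c, hd c} \<in> E" using assms by (auto simp: is_cycle_def)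
  have xs: "xs \<noteq> []" using c(2) Cons by auto
  then have "is_path V E xs" using is_path_drop[OF c(1), of 1] Cons by simp
  then have "is_path V E (xs @ [x])"
    using is_path_snoc[of V E xs] c xs(1) Cons by (auto simp: is_path_def)
  moreover have "{x, hd xs} \<in> E" using is_path_edge[OF c(1), of 0] c(2) xs(1) Cons by (simp add: hd_conv_nth)
  ultimately show ?thesis using c(2) Cons xs by (simp add: is_cycle_def insert_commute)
qed (use assms in \<open>simp add: is_cycle_def\<close>)

lemma is_cycle_rotate: "is_cycle V E c \<Longrightarrow> is_cycle V E (rotate n c)"
  by (induction n) (simp_all add: is_cycle_rotate1)

lemma path_edge_ne_closing_edge:
  assumes "is_cycle V E c" and "Suc k < length c"
  shows "{c ! k, c ! Suc k} \<noteq> {last c, hd c}"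
proof -
  have d: "distinct c" and l: "length c \<ge> 3" using assms(1) by (auto simp: is_cycle_def is_path_def)
  then have "c \<noteq> []" by auto
  then have "last c = c ! (length c - 1)" "hd c = c ! 0" by (simp_all add: last_conv_nth hd_conv_nth)
  moreover have "c ! k \<noteq> c ! (length c - 1)"
    using nth_eq_iff_index_eq[OF d, of k "length c - 1"] assms(2) by simp
  moreover have "c ! k \<noteq> c ! 0 \<or> c ! Suc k \<noteq> c ! (length c - 1)"
    using nth_eq_iff_index_eq[OF d, of k 0] nth_eq_iff_index_eq[OF d, of "Suc k" "length c - 1"]
      assms(2) l \<open>c \<noteq> []\<close> by auto
  ultimately show ?thesis by (auto simp: doubleton_eq_iff)
qed

lemma acyclic_edge_not_reachable:
  assumes sg: "simple_graph V E" and ac: "acyclic_graph V E" and e: "{x, y} \<in> E"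
  shows "(x, y) \<notin> (adj (E - {{x, y}}))\<^sup>*"
proof
  assume r: "(x, y) \<in> (adj (E - {{x, y}}))\<^sup>*"
  have sg': "simple_graph V (E - {{x, y}})" using sg by (simp add: simple_graph_def)
  have xy: "x \<noteq> y" "x \<in> V" using simple_graph_edgeD[OF sg e] by auto
  obtain p where p: "is_path V (E - {{x, y}}) p" "hd p = x" "last p = y"
    using reachable_imp_path[OF sg' xy(2) r] by blast
  have "length p \<noteq> 1"
  proof
    assume "length p = 1"
    then obtain z where "p = [z]" by (metis One_nat_def length_0_conv length_Suc_conv)
    then show False using p xy by simp
  qed
  moreover have "length p \<noteq> 2"
  proof
    assume "length p = 2"
    then obtain z w where "p = [z, w]" by (metis One_nat_def Suc_1 length_0_conv length_Suc_conv)
    then show False using p is_path_edge[OF p(1), of 0] by simp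
  qed
  moreover have "p \<noteq> []" using p(1) by (simp add: is_path_def)
  ultimately have "length p \<ge> 3" by (cases "length p") (auto simp: numeral_3_eq_3 less_Suc_eq_le[symmetric])
  moreover have "is_path V E p" using is_path_mono[OF p(1)] by blast
  moreover have "{last p, hd p} \<in> E" using p e by (simp add: insert_commute)
  ultimately have "is_cycle V E p" by (simp add: is_cycle_def)
  then show False using ac by (auto simp: acyclic_graph_def)
qed

lemma reachable_if_cycle_closed_by_edge:
  assumes c: "is_cycle V (insert {x, y} G) c" and xy: "{last c, hd c} = {x, y}"
  shows "(x, y) \<in> (adj G)\<^sup>*"
proof -
  have cp: "is_path V (insert {x, y} G) c" and l: "length c \<ge> 3"
    using c by (auto simp: is_cycle_def)
  have "{c ! k, c ! Suc k} \<in> G" if "0 \<le> k" "k < length c - 1" for k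
    using is_path_edge[OF cp, of k] path_edge_ne_closing_edge[OF c, of k] xy that by auto
  then have "(c ! 0, c ! (length c - 1)) \<in> (adj G)\<^sup>*" using reachable_along_path by blast
  moreover have "c \<noteq> []" using l by auto
  then have "hd c = c ! 0" "last c = c ! (length c - 1)" by (simp_all add: hd_conv_nth last_conv_nth)
  ultimately have "(hd c, last c) \<in> (adj G)\<^sup>*" "(last c, hd c) \<in> (adj G)\<^sup>*"
    using reachable_sym by auto
  with xy show ?thesis by (auto simp: doubleton_eq_iff)
qed

lemma acyclic_graph_insert_edge:
  assumes ac: "acyclic_graph V G" and xy: "(x, y) \<notin> (adj G)\<^sup>*"
  shows "acyclic_graph V (insert {x, y} G)"
proof -
  have closing: False if "is_cycle V (insert {x, y} G) c" "{last c, hd c} = {x, y}" for c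
    using reachable_if_cycle_closed_by_edge[OF that] xy by blast
  show ?thesis
    unfolding acyclic_graph_def
  proof
    assume "\<exists>c. is_cycle V (insert {x, y} G) c"
    then obtain c where c: "is_cycle V (insert {x, y} G) c" by blast
    have cp: "is_path V (insert {x, y} G) c" and l: "length c \<ge> 3" and ce: "{last c, hd c} \<in> G"
      using c closing by (auto simp: is_cycle_def)
    show False
    proof (cases "\<exists>j. Suc j < length c \<and> {c ! j, c ! Suc j} = {x, y}")
      case True
      then obtain j where j: "Suc j < length c" "{c ! j, c ! Suc j} = {x, y}" by blast
      \<comment> \<open>rotate the new edge into the closing position\<close>
      let ?d = "rotate (Suc j) c"
      have "?d = drop (Suc j) c @ take (Suc j) c" using j(1) by (simp add: rotate_drop_take)
      then have "last ?d = c ! j" "hd ?d = c ! Suc j" using j(1)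
        by (simp_all add: hd_drop_conv_nth take_Suc_conv_app_nth)
      then show False using closing[OF is_cycle_rotate[OF c, of "Suc j"]] j(2) by (metis insert_commute)
    next
      case False
      then have "is_path V G c" using cp by (auto simp: is_path_def)
      then show False using ac ce l by (auto simp: acyclic_graph_def is_cycle_def)
    qed
  qed
qed

definition neighbors :: "'a set \<Rightarrow> 'a set set \<Rightarrow> 'a \<Rightarrow> 'a set" where
  "neighbors V E w = {u \<in> V. {u, w} \<in> E}"

lemma deg_eq_card_neighbors: "deg V E w = card (neighbors V E w)"
  by (simp add: deg_def neighbors_def)

lemma finite_neighbors: "simple_graph V E \<Longrightarrow> finite (neighbors V E w)"
  by (simp add: simple_graph_def neighbors_def)

lemma acyclic_path_extend:
  assumes sg: "simple_graph V E" and ac: "acyclic_graph V E" and p: "is_path V E p"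
    and d: "2 \<le> deg V E (last p)"
  obtains t where "{last p, t} \<in> E" "t \<notin> set p" "is_path V E (p @ [t])"
proof -
  define m where "m = length p"
  have pne: "p \<noteq> []" using p by (simp add: is_path_def)
  \<comment> \<open>only the predecessor p ! (m - 2) of last p can be a neighbour on p, otherwise there is a
    cycle; for m = 1 the truncated index gives last p itself, which is no neighbour\<close>
  have "\<not> neighbors V E (last p) \<subseteq> {p ! (m - 2)}"
  proof
    assume "neighbors V E (last p) \<subseteq> {p ! (m - 2)}"
    then have "card (neighbors V E (last p)) \<le> 1" using card_mono[of "{p ! (m - 2)}"] by fastforce
    then show False using d by (simp add: deg_eq_card_neighbors)
  qed
  then obtain t where t: "t \<in> V" "{t, last p} \<in> E" "t \<noteq> p ! (m - 2)"
    by (auto simp: neighbors_def)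
  have "t \<noteq> last p" using simple_graph_edgeD[OF sg t(2)] by simp
  have "t \<notin> set p"
  proof
    assume "t \<in> set p"
    then obtain j where j: "j < m" "p ! j = t" by (metis in_set_conv_nth m_def)
    have "j \<noteq> m - 1" using j \<open>t \<noteq> last p\<close> pne by (auto simp: last_conv_nth m_def)
    moreover have "j \<noteq> m - 2" using j t(3) by auto
    ultimately have "j + 3 \<le> m" using j by linarith
    then have "is_cycle V E (drop j p)"
      using is_path_drop[OF p, of j] j t(2)
      by (auto simp: is_cycle_def m_def hd_drop_conv_nth insert_commute)
    then show False using ac by (auto simp: acyclic_graph_def)
  qed
  then show ?thesis using that is_path_snoc[OF p _ t(1)] t(2) by (simp add: insert_commute)
qed

section \<open>Edge switches in trees\<close>

lemma is_tree_edge_exchange: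
  assumes tree: "is_tree V E" and xy: "{x, y} \<in> E" and z: "z \<in> V"
    and yz: "(y, z) \<in> (adj (E - {{x, y}}))\<^sup>*"
  shows "is_tree V (insert {x, z} (E - {{x, y}}))"
proof -
  let ?F = "E - {{x, y}}"
  let ?E' = "insert {x, z} ?F"
  have sg: "simple_graph V E" and ac: "acyclic_graph V E" and conn: "connected_graph V E"
    and "V \<noteq> {}" using tree by (auto simp: is_tree_def)
  have xz: "(x, z) \<notin> (adj ?F)\<^sup>*"
  proof
    assume "(x, z) \<in> (adj ?F)\<^sup>*"
    then have "(x, y) \<in> (adj ?F)\<^sup>*" using reachable_sym[OF yz] by (rule rtrancl_trans)
    then show False using acyclic_edge_not_reachable[OF sg ac xy] by simp
  qed
  have "x \<noteq> z" using xz by auto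
  moreover have "x \<in> V" using simple_graph_edgeD[OF sg xy] by simp
  ultimately have "simple_graph V ?E'" using sg z unfolding simple_graph_def by fast
  moreover have "acyclic_graph V ?E'"
    using acyclic_graph_insert_edge[OF acyclic_graph_subgraph[OF ac order_refl Diff_subset] xz] .
  moreover have "(p, q) \<in> (adj ?E')\<^sup>*" if "{p, q} \<in> E" for p q
  proof (cases "{p, q} = {x, y}")
    case True
    have "(x, z) \<in> adj ?E'" by (simp add: adj_def)
    moreover have "(z, y) \<in> (adj ?E')\<^sup>*" using reachable_mono[OF subset_insertI reachable_sym[OF yz]] .
    ultimately have "(x, y) \<in> (adj ?E')\<^sup>*" by (rule converse_rtrancl_into_rtrancl)
    then show ?thesis using True reachable_sym[of x y] by (auto simp: doubleton_eq_iff)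
  next
    case False
    then have "(p, q) \<in> adj ?E'" using that by (simp add: adj_def)
    then show ?thesis by blast
  qed
  then have "connected_graph V ?E'"
    using conn reachable_if_edges_reachable[of E ?E'] unfolding connected_graph_iff_adj by simp
  ultimately show ?thesis using \<open>V \<noteq> {}\<close> by (simp add: is_tree_def)
qed

definition edge_switch :: "'a set set \<Rightarrow> 'a \<Rightarrow> 'a \<Rightarrow> 'a \<Rightarrow> 'a \<Rightarrow> 'a set set" where
  "edge_switch E a b v y = insert {a, v} (insert {b, y} (E - {{a, b}, {v, y}}))"

lemma edge_switch_nondegenerate:
  assumes sg: "simple_graph V E" and ac: "acyclic_graph V E"
    and ab: "{a, b} \<in> E" and vy: "{v, y} \<in> E" and "b \<noteq> v"
    and bv: "(b, v) \<in> (adj (E - {{a, b}, {v, y}}))\<^sup>*"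
  shows "distinct [a, b, v, y] \<and> {a, v} \<notin> E \<and> {b, y} \<notin> E"
proof -
  have nab: "(a, b) \<notin> (adj (E - {{a, b}}))\<^sup>*" using acyclic_edge_not_reachable[OF sg ac ab] .
  have nvy: "(v, y) \<notin> (adj (E - {{v, y}}))\<^sup>*" using acyclic_edge_not_reachable[OF sg ac vy] .
  have bv1: "(b, v) \<in> (adj (E - {{a, b}}))\<^sup>*" by (rule reachable_mono[OF _ bv]) auto
  have vb2: "(v, b) \<in> (adj (E - {{v, y}}))\<^sup>*" by (rule reachable_mono[OF _ reachable_sym[OF bv]]) auto
  have "a \<noteq> b" "v \<noteq> y" using simple_graph_edgeD[OF sg ab] simple_graph_edgeD[OF sg vy] by auto
  have "a \<noteq> v" using nab reachable_sym[OF bv1] by auto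
  have "b \<noteq> y" using nvy vb2 by auto
  have av: "{a, v} \<notin> E"
  proof
    assume "{a, v} \<in> E"
    then have "(v, a) \<in> adj (E - {{a, b}})"
      using \<open>b \<noteq> v\<close> \<open>a \<noteq> b\<close> by (auto simp: adj_def doubleton_eq_iff insert_commute)
    with bv1 have "(b, a) \<in> (adj (E - {{a, b}}))\<^sup>*" by (rule rtrancl_into_rtrancl)
    then show False using nab reachable_sym[of b a] by blast
  qed
  then have "a \<noteq> y" using vy by (auto simp: insert_commute)
  have "{b, y} \<notin> E"
  proof
    assume "{b, y} \<in> E"
    then have "(b, y) \<in> adj (E - {{v, y}})"
      using \<open>b \<noteq> v\<close> \<open>b \<noteq> y\<close> by (auto simp: adj_def doubleton_eq_iff)
    with vb2 have "(v, y) \<in> (adj (E - {{v, y}}))\<^sup>*" by (rule rtrancl_into_rtrancl)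
    then show False using nvy by blast
  qed
  then show ?thesis
    using av \<open>a \<noteq> b\<close> \<open>v \<noteq> y\<close> \<open>a \<noteq> v\<close> \<open>b \<noteq> y\<close> \<open>a \<noteq> y\<close> \<open>b \<noteq> v\<close> by simp
qed

lemma is_tree_edge_switch:
  assumes tree: "is_tree V E" and ab: "{a, b} \<in> E" and vy: "{v, y} \<in> E" and "b \<noteq> v"
    and bv: "(b, v) \<in> (adj (E - {{a, b}, {v, y}}))\<^sup>*"
  shows "is_tree V (edge_switch E a b v y)"
proof -
  have sg: "simple_graph V E" and ac: "acyclic_graph V E" using tree by (auto simp: is_tree_def)
  have dist: "distinct [a, b, v, y]"
    using edge_switch_nondegenerate[OF sg ac ab vy \<open>b \<noteq> v\<close> bv] by blast
  have V: "b \<in> V" "v \<in> V" using simple_graph_edgeD[OF sg ab] simple_graph_edgeD[OF sg vy] by auto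
  \<comment> \<open>the switch is two successive edge exchanges: ab by av, then vy by yb\<close>
  let ?E1 = "insert {a, v} (E - {{a, b}})"
  have "(b, v) \<in> (adj (E - {{a, b}}))\<^sup>*" by (rule reachable_mono[OF _ bv]) auto
  then have tree1: "is_tree V ?E1" using is_tree_edge_exchange[OF tree ab V(2)] by blast
  have sym: "{y, v} = {v, y}" "{y, b} = {b, y}" by (simp_all add: insert_commute)
  have "{a, v} \<noteq> {v, y}" using dist by (auto simp: doubleton_eq_iff)
  then have switch: "insert {y, b} (?E1 - {{y, v}}) = edge_switch E a b v y"
    unfolding edge_switch_def sym by blast
  have "{y, v} \<in> ?E1" using vy dist by (auto simp: doubleton_eq_iff insert_commute)
  moreover have "(v, b) \<in> (adj (?E1 - {{y, v}}))\<^sup>*"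
    by (rule reachable_mono[OF _ reachable_sym[OF bv]]) (auto simp: sym)
  ultimately have "is_tree V (insert {y, b} (?E1 - {{y, v}}))"
    using is_tree_edge_exchange[OF tree1 _ V(1)] by blast
  then show ?thesis using switch by simp
qed

lemma card_insert_Diff_singleton:
  "finite A \<Longrightarrow> b \<in> A \<Longrightarrow> v \<notin> A \<Longrightarrow> card (insert v (A - {b})) = card A"
  by (metis card.remove card_insert_disjoint finite_Diff insert_Diff insert_iff)

lemma edge_switch_swap: "edge_switch E a b v y = edge_switch E b a y v"
  by (simp add: edge_switch_def insert_commute)

lemma edge_switch_flip: "edge_switch E a b v y = edge_switch E v y a b"
  by (simp add: edge_switch_def insert_commute)

lemma deg_edge_switch_first:
  assumes sg: "simple_graph V E" and "{a, b} \<in> E" "{a, v} \<notin> E" "v \<in> V" "distinct [a, b, v, y]"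
  shows "deg V (edge_switch E a b v y) a = deg V E a"
proof -
  have "neighbors V (edge_switch E a b v y) a = insert v (neighbors V E a - {b})"
    using assms by (auto simp: neighbors_def edge_switch_def doubleton_eq_iff)
  moreover have "b \<in> neighbors V E a" "v \<notin> neighbors V E a"
    using assms simple_graph_edgeD[OF sg] by (auto simp: neighbors_def insert_commute)
  ultimately show ?thesis
    using card_insert_Diff_singleton[OF finite_neighbors[OF sg]] by (simp add: deg_eq_card_neighbors)
qed

lemma deg_edge_switch:
  assumes sg: "simple_graph V E" and ab: "{a, b} \<in> E" and vy: "{v, y} \<in> E"
    and "{a, v} \<notin> E" "{b, y} \<notin> E" and dist: "distinct [a, b, v, y]"
  shows "deg V (edge_switch E a b v y) = deg V E"
proof
  fix w
  have V: "a \<in> V" "b \<in> V" "v \<in> V" "y \<in> V"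
    using simple_graph_edgeD[OF sg ab] simple_graph_edgeD[OF sg vy] by auto
  have sym: "{b, a} = {a, b}" "{y, v} = {v, y}" "{v, a} = {a, v}" "{y, b} = {b, y}"
    by (simp_all add: insert_commute)
  \<comment> \<open>the four switched vertices are interchanged by the symmetries of the switch\<close>
  consider "w = a" | "w = b" | "w = v" | "w = y" | "w \<notin> {a, b, v, y}" by auto
  then show "deg V (edge_switch E a b v y) w = deg V E w"
  proof cases
    case 1 then show ?thesis using deg_edge_switch_first[of V E a b v y] assms V by simp
  next
    case 2 then show ?thesis
      using deg_edge_switch_first[of V E b a y v] assms V sym by (simp add: edge_switch_swap) blast
  next
    case 3 then show ?thesis
      using deg_edge_switch_first[of V E v y a b] assms V sym by (simp add: edge_switch_flip) blast
  next
    case 4 then show ?thesis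
      using deg_edge_switch_first[of V E y v b a] assms V sym
      by (simp add: edge_switch_flip[of E a b] edge_switch_swap[of E v]) blast
  next
    case 5
    then have "neighbors V (edge_switch E a b v y) w = neighbors V E w"
      by (auto simp: neighbors_def edge_switch_def doubleton_eq_iff)
    then show ?thesis by (simp add: deg_eq_card_neighbors)
  qed
qed

lemma M2_edge_switch:
  assumes sg: "simple_graph V E" and ab: "{a, b} \<in> E" and vy: "{v, y} \<in> E"
    and "{a, v} \<notin> E" "{b, y} \<notin> E" and dist: "distinct [a, b, v, y]"
  shows "M2 V (edge_switch E a b v y) + deg V E a * deg V E b + deg V E v * deg V E y
    = M2 V E + deg V E a * deg V E v + deg V E b * deg V E y"
proof -
  define g where "g e = (\<Prod>x\<in>e. deg V E x)" for e
  define F where "F = E - {{a, b}, {v, y}}"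
  have fF: "finite F" using simple_graph_finite_edges[OF sg] by (simp add: F_def)
  have "{a, b} \<noteq> {v, y}" "{a, v} \<noteq> {b, y}" using dist by (auto simp: doubleton_eq_iff)
  moreover have "{a, b} \<notin> F" "{v, y} \<notin> F" "{a, v} \<notin> F" "{b, y} \<notin> F"
    using assms(4,5) by (simp_all add: F_def)
  moreover have "E = insert {a, b} (insert {v, y} F)" using ab vy by (auto simp: F_def)
  then have "M2 V E = sum g (insert {a, b} (insert {v, y} F))" by (simp add: M2_def g_def)
  moreover have "M2 V (edge_switch E a b v y) = sum g (insert {a, v} (insert {b, y} F))"
    using deg_edge_switch[OF assms] by (simp add: M2_def g_def edge_switch_def F_def)
  ultimately have "M2 V E = g {a, b} + (g {v, y} + sum g F)"
    and "M2 V (edge_switch E a b v y) = g {a, v} + (g {b, y} + sum g F)"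
    using fF by simp_all
  moreover have "g {a, b} = deg V E a * deg V E b" "g {v, y} = deg V E v * deg V E y"
    "g {a, v} = deg V E a * deg V E v" "g {b, y} = deg V E b * deg V E y"
    using dist by (simp_all add: g_def)
  ultimately show ?thesis by simp
qed

lemma edge_switch_increases_M2:
  assumes ct: "chemical_tree V E" and ab: "{a, b} \<in> E" and vy: "{v, y} \<in> E"
    and bv: "(b, v) \<in> (adj (E - {{a, b}, {v, y}}))\<^sup>*"
    and da: "deg V E a = 4" and dv: "deg V E v = 4" and db: "deg V E b < 4" and dy: "deg V E y < 4"
  shows "chemical_tree V (edge_switch E a b v y) \<and> deg V (edge_switch E a b v y) = deg V E
    \<and> M2 V E < M2 V (edge_switch E a b v y)"
proof -
  have tree: "is_tree V E" and sg: "simple_graph V E" and ac: "acyclic_graph V E"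
    using ct by (auto simp: chemical_tree_def is_tree_def)
  have "b \<noteq> v" using db dv by auto
  then have nd: "distinct [a, b, v, y]" "{a, v} \<notin> E" "{b, y} \<notin> E"
    using edge_switch_nondegenerate[OF sg ac ab vy _ bv] by auto
  have deg: "deg V (edge_switch E a b v y) = deg V E" using deg_edge_switch[OF sg ab vy nd(2,3,1)] .
  have "chemical_tree V (edge_switch E a b v y)"
    using is_tree_edge_switch[OF tree ab vy \<open>b \<noteq> v\<close> bv] ct deg by (simp add: chemical_tree_def)
  moreover have "4 * deg V E b + 4 * deg V E y < 16 + deg V E b * deg V E y"
  proof -
    have "0 < (4 - int (deg V E b)) * (4 - int (deg V E y))" using db dy by simp
    then have "int (4 * deg V E b + 4 * deg V E y) < int (16 + deg V E b * deg V E y)"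
      by (simp add: algebra_simps)
    then show ?thesis by linarith
  qed
  ultimately show ?thesis using M2_edge_switch[OF sg ab vy nd(2,3,1)] da dv deg by simp
qed

section \<open>Counting segments\<close>

lemma is_segment_internal_deg:
  "is_segment V E p \<Longrightarrow> 0 < i \<Longrightarrow> i < length p - 1 \<Longrightarrow> deg V E (p ! i) = 2"
  unfolding is_segment_def by blast

lemma is_segment_path: "is_segment V E p \<Longrightarrow> is_path V E p"
  unfolding is_segment_def by blast

lemma is_segment_length: "is_segment V E p \<Longrightarrow> length p \<ge> 2"
  unfolding is_segment_def by blast

lemma is_segment_ends_deg:
  assumes "is_segment V E p"
  shows "deg V E (p ! 0) \<noteq> 2 \<and> deg V E (p ! (length p - 1)) \<noteq> 2"
proof -
  have "p \<noteq> []" using is_segment_length[OF assms] by auto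
  then show ?thesis using assms by (simp add: is_segment_def hd_conv_nth last_conv_nth)
qed

lemma neighbors_segment_internal:
  assumes sg: "simple_graph V E" and p: "is_segment V E p" and i: "0 < i" "i < length p - 1"
  shows "neighbors V E (p ! i) = {p ! (i - 1), p ! Suc i}"
proof -
  have pp: "is_path V E p" using p by (rule is_segment_path)
  have "{p ! (i - 1), p ! i} \<in> E" "{p ! i, p ! Suc i} \<in> E"
    using is_path_edge[OF pp, of "i - 1"] is_path_edge[OF pp, of i] i by simp_all
  then have "{p ! (i - 1), p ! Suc i} \<subseteq> neighbors V E (p ! i)"
    using is_path_nth_mem[OF pp, of "i - 1"] is_path_nth_mem[OF pp, of "Suc i"] i
    by (simp add: neighbors_def insert_commute)
  moreover have "p ! (i - 1) \<noteq> p ! Suc i"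
    using nth_eq_iff_index_eq[OF is_path_distinct[OF pp], of "i - 1" "Suc i"] i by simp
  then have "card {p ! (i - 1), p ! Suc i} = card (neighbors V E (p ! i))"
    using is_segment_internal_deg[OF p i] by (simp add: deg_eq_card_neighbors)
  ultimately show ?thesis using card_subset_eq[OF finite_neighbors[OF sg]] by blast
qed

lemma segments_agree_if_start_eq:
  assumes sg: "simple_graph V E" and p: "is_segment V E p" and q: "is_segment V E q"
    and start: "p ! 0 = q ! 0" "p ! 1 = q ! 1"
  shows "Suc i < min (length p) (length q) \<Longrightarrow> p ! i = q ! i \<and> p ! Suc i = q ! Suc i"
proof (induction i)
  case (Suc i)
  then have ih: "p ! i = q ! i" "p ! Suc i = q ! Suc i" by auto
  have i: "0 < Suc i" "Suc i < length p - 1" "Suc i < length q - 1" using Suc.prems by auto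
  \<comment> \<open>an internal vertex has exactly two neighbours, so the walk cannot branch\<close>
  have "{p ! i, p ! Suc (Suc i)} = {p ! i, q ! Suc (Suc i)}"
    using neighbors_segment_internal[OF sg p i(1,2)] neighbors_segment_internal[OF sg q i(1,3)] ih
    by simp
  moreover have "q ! i \<noteq> q ! Suc (Suc i)"
    using nth_eq_iff_index_eq[OF is_path_distinct[OF is_segment_path[OF q]], of i "Suc (Suc i)"]
      Suc.prems by simp
  ultimately have "p ! Suc (Suc i) = q ! Suc (Suc i)" using ih by (metis doubleton_eq_iff)
  then show ?case using ih by simp
qed (use start in simp)

lemma segment_length_le_imp_eq:
  assumes sg: "simple_graph V E" and p: "is_segment V E p" and q: "is_segment V E q"
    and start: "p ! 0 = q ! 0" "p ! 1 = q ! 1" and le: "length p \<le> length q"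
  shows "length p = length q"
proof (rule ccontr)
  assume "length p \<noteq> length q"
  then have lt: "length p < length q" using le by simp
  obtain m where m: "length p = Suc (Suc m)"
    using is_segment_length[OF p] by (metis add_2_eq_Suc le_Suc_ex)
  then have "p ! (length p - 1) = q ! (length p - 1)"
    using segments_agree_if_start_eq[OF sg p q start, of m] lt by simp
  moreover have "deg V E (q ! (length p - 1)) = 2" using is_segment_internal_deg[OF q] lt m by simp
  ultimately show False using is_segment_ends_deg[OF p] by simp
qed

lemma segment_eq_if_start_eq:
  assumes sg: "simple_graph V E" and p: "is_segment V E p" and q: "is_segment V E q"
    and start: "p ! 0 = q ! 0" "p ! 1 = q ! 1"
  shows "p = q"
proof (rule nth_equalityI)
  show len: "length p = length q"
    using segment_length_le_imp_eq[OF sg p q start] segment_length_le_imp_eq[OF sg q p start[symmetric]]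
    by linarith
  fix i assume "i < length p"
  then show "p ! i = q ! i"
    using segments_agree_if_start_eq[OF sg p q start, of "i - 1"] start(1) len by (cases i) auto
qed

lemma segment_exists:
  assumes sg: "simple_graph V E" and ac: "acyclic_graph V E"
    and w: "w \<in> V" "deg V E w \<noteq> 2" and x: "{x, w} \<in> E"
  shows "\<exists>p. is_segment V E p \<and> p ! 0 = w \<and> p ! 1 = x"
proof -
  \<comment> \<open>a longest path starting with w, x whose inner vertices have degree 2 is a segment\<close>
  define Q where "Q p \<longleftrightarrow> is_path V E p \<and> length p \<ge> 2 \<and> p ! 0 = w \<and> p ! 1 = x \<and>
     (\<forall>i. 0 < i \<and> i < length p - 1 \<longrightarrow> deg V E (p ! i) = 2)" for p
  have "x \<noteq> w" "x \<in> V" using simple_graph_edgeD[OF sg x] by auto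
  then have "Q [w, x]" using w x by (auto simp: Q_def is_path_def insert_commute less_Suc_eq)
  moreover have "finite V" using sg by (simp add: simple_graph_def)
  moreover have "\<And>p. Q p \<Longrightarrow> is_path V E p" by (simp add: Q_def)
  ultimately obtain p where p: "Q p" and pmax: "\<And>q. Q q \<Longrightarrow> length q \<le> length p"
    using maximal_path_exists by metis
  have pp: "is_path V E p" and l2: "length p \<ge> 2" using p by (auto simp: Q_def)
  then have "p \<noteq> []" by auto
  have "deg V E (last p) \<noteq> 2"
  proof
    assume d: "deg V E (last p) = 2"
    then obtain t where t: "{last p, t} \<in> E" "t \<notin> set p" "is_path V E (p @ [t])"
      using acyclic_path_extend[OF sg ac pp] by auto
    have "deg V E (p ! (length p - 1)) = 2" using d \<open>p \<noteq> []\<close> by (simp add: last_conv_nth)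
    then have "deg V E ((p @ [t]) ! i) = 2" if "0 < i" "i < length p" for i
      using p that by (cases "i = length p - 1") (auto simp: Q_def nth_append)
    then have "Q (p @ [t])" using p t(3) l2 by (auto simp: Q_def nth_append)
    then show False using pmax by fastforce
  qed
  moreover have "hd p = w" using p \<open>p \<noteq> []\<close> by (simp add: Q_def hd_conv_nth)
  ultimately have "is_segment V E p" using p w l2 by (auto simp: is_segment_def Q_def)
  then show ?thesis using p by (auto simp: Q_def)
qed

lemma is_segment_rev: "is_segment V E p \<Longrightarrow> is_segment V E (rev p)"
  unfolding is_segment_def
proof (intro conjI allI impI)
  fix i
  assume p: "is_path V E p \<and> 2 \<le> length p \<and> deg V E (hd p) \<noteq> 2 \<and> deg V E (last p) \<noteq> 2 \<and>
      (\<forall>i. 0 < i \<and> i < length p - 1 \<longrightarrow> deg V E (p ! i) = 2)"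
    and i: "0 < i \<and> i < length (rev p) - 1"
  moreover have "0 < length p - 1 - i \<and> length p - 1 - i < length p - 1" using i by auto
  ultimately have "deg V E (p ! (length p - 1 - i)) = 2" by blast
  moreover have "i < length p" using i by auto
  ultimately show "deg V E (rev p ! i) = 2" by (simp add: rev_nth)
qed (auto simp: is_path_rev hd_rev last_rev)

lemma path_edges_rev: "path_edges (rev p) = path_edges p"
proof -
  have "path_edges (rev p) \<subseteq> path_edges p" for p :: "'a list"
  proof
    fix e assume "e \<in> path_edges (rev p)"
    then obtain i where i: "Suc i < length p" "e = {rev p ! i, rev p ! Suc i}"
      unfolding path_edges_def by auto
    define j where "j = length p - 2 - i"
    have j: "Suc j < length p" "length p - 1 - i = Suc j" "length p - 1 - Suc i = j"
      using i unfolding j_def by auto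
    have "e = {p ! j, p ! Suc j}" using i j by (simp add: rev_nth insert_commute)
    then show "e \<in> path_edges p" using j unfolding path_edges_def by auto
  qed
  from this[of p] this[of "rev p"] show ?thesis by auto
qed

lemma segment_eq_or_rev_if_path_edges_eq:
  assumes sg: "simple_graph V E" and p: "is_segment V E p" and q: "is_segment V E q"
    and pe: "path_edges p = path_edges q"
  shows "q = p \<or> q = rev p"
proof -
  have l2: "length p \<ge> 2" "length q \<ge> 2" using p q by (auto simp: is_segment_def)
  then have "{p ! 0, p ! Suc 0} \<in> path_edges p" unfolding path_edges_def by fastforce
  then have "{p ! 0, p ! Suc 0} \<in> path_edges q" using pe by simp
  then obtain i where i: "Suc i < length q" "{p ! 0, p ! Suc 0} = {q ! i, q ! Suc i}"
    unfolding path_edges_def by auto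
  have d0: "deg V E (p ! 0) \<noteq> 2" using is_segment_ends_deg[OF p] by simp
  \<comment> \<open>the first edge of p is an end edge of q, since p ! 0 does not have degree 2\<close>
  show ?thesis
  proof (cases "p ! 0 = q ! i")
    case True
    then have "i = 0" using is_segment_internal_deg[OF q, of i] i d0 by (cases i) auto
    then show ?thesis using segment_eq_if_start_eq[OF sg p q] True i(2)
      by (auto simp: doubleton_eq_iff)
  next
    case False
    then have F: "p ! 0 = q ! Suc i" "p ! Suc 0 = q ! i" using i(2) by (auto simp: doubleton_eq_iff)
    then have si: "Suc i = length q - 1" using is_segment_internal_deg[OF q, of "Suc i"] i d0 by force
    moreover have "0 < length q" "1 < length q" "length q - Suc (Suc 0) = i" using l2 si by auto
    ultimately have "rev q ! 0 = p ! 0" "rev q ! 1 = p ! 1" using F by (simp_all add: rev_nth)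
    then show ?thesis using segment_eq_if_start_eq[OF sg p is_segment_rev[OF q]] by simp
  qed
qed

lemma finite_segment_paths: "simple_graph V E \<Longrightarrow> finite {p. is_segment V E p}"
proof -
  assume sg: "simple_graph V E"
  then have fV: "finite V" by (simp add: simple_graph_def)
  have "{p. is_segment V E p} \<subseteq> {xs. set xs \<subseteq> V \<and> length xs \<le> card V}"
    using length_path_le_card[OF _ fV] by (auto simp: is_segment_def is_path_def)
  then show ?thesis using finite_lists_length_le[OF fV] finite_subset by blast
qed

lemma bij_betw_segment_start:
  assumes sg: "simple_graph V E" and ac: "acyclic_graph V E"
  shows "bij_betw (\<lambda>p. (p ! 0, p ! 1)) {p. is_segment V E p}
    (SIGMA w:{w \<in> V. deg V E w \<noteq> 2}. neighbors V E w)"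
  unfolding bij_betw_def
proof (intro conjI subset_antisym subsetI)
  show "inj_on (\<lambda>p. (p ! 0, p ! 1)) {p. is_segment V E p}"
    by (rule inj_onI) (use segment_eq_if_start_eq[OF sg] in auto)
next
  fix z assume "z \<in> (\<lambda>p. (p ! 0, p ! 1)) ` {p. is_segment V E p}"
  then obtain p where p: "is_segment V E p" "z = (p ! 0, p ! 1)" by auto
  have pp: "is_path V E p" and l2: "length p \<ge> 2" using p(1) by (auto simp: is_segment_def)
  have "{p ! 0, p ! Suc 0} \<in> E" using is_path_edge[OF pp, of 0] l2 by simp
  moreover have "p \<noteq> []" using l2 by auto
  then have "p ! 0 \<in> V" "p ! 1 \<in> V"
    using is_path_nth_mem[OF pp, of 0] is_path_nth_mem[OF pp, of 1] l2 by auto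
  ultimately show "z \<in> (SIGMA w:{w \<in> V. deg V E w \<noteq> 2}. neighbors V E w)"
    using p is_segment_ends_deg[OF p(1)] by (auto simp: neighbors_def insert_commute)
next
  fix z assume "z \<in> (SIGMA w:{w \<in> V. deg V E w \<noteq> 2}. neighbors V E w)"
  then obtain w x where "z = (w, x)" "w \<in> V" "deg V E w \<noteq> 2" "{x, w} \<in> E"
    by (auto simp: neighbors_def)
  then show "z \<in> (\<lambda>p. (p ! 0, p ! 1)) ` {p. is_segment V E p}"
    using segment_exists[OF sg ac] by fastforce
qed

lemma card_segments_with_path_edges:
  assumes sg: "simple_graph V E" and p: "is_segment V E p"
  shows "card {q. is_segment V E q \<and> path_edges q = path_edges p} = 2"
proof -
  have "{q. is_segment V E q \<and> path_edges q = path_edges p} \<subseteq> {p, rev p}"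
    using segment_eq_or_rev_if_path_edges_eq[OF sg p] by blast
  moreover have "{p, rev p} \<subseteq> {q. is_segment V E q \<and> path_edges q = path_edges p}"
    using p is_segment_rev[OF p] path_edges_rev[of p] by simp
  moreover have "p \<noteq> rev p"
  proof
    assume "p = rev p"
    have l: "0 < length p" "length p - 1 \<noteq> 0" using is_segment_length[OF p] by auto
    have "p ! 0 = rev p ! 0" using \<open>p = rev p\<close> by simp
    also have "\<dots> = p ! (length p - 1)" using l(1) by (simp add: rev_nth)
    finally have "p ! 0 = p ! (length p - 1)" .
    then show False using nth_eq_iff_index_eq[OF is_path_distinct[OF is_segment_path[OF p]]] l
      by (metis diff_less zero_less_one)
  qed
  ultimately show ?thesis by (simp add: subset_antisym)
qed

lemma two_num_segments_eq_sum_deg: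
  assumes sg: "simple_graph V E" and ac: "acyclic_graph V E"
  shows "2 * num_segments V E = (\<Sum>w\<in>{w \<in> V. deg V E w \<noteq> 2}. deg V E w)"
proof -
  define L where "L = {p. is_segment V E p}"
  have fL: "finite L" using finite_segment_paths[OF sg] by (simp add: L_def)
  \<comment> \<open>each segment is traversed in two directions, and a directed segment is determined by
    its first edge, which starts at a vertex of degree other than 2\<close>
  have "card L = (\<Sum>s\<in>path_edges ` L. card {q \<in> L. path_edges q = s})"
    using sum.image_gen[OF fL, of "\<lambda>_. (1::nat)" path_edges] by simp
  also have "\<dots> = (\<Sum>s\<in>path_edges ` L. 2)"
    using card_segments_with_path_edges[OF sg] by (intro sum.cong) (auto simp: L_def)
  also have "\<dots> = 2 * num_segments V E"
    unfolding num_segments_def segments_def L_def by (simp add: setcompr_eq_image)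
  finally have "card L = 2 * num_segments V E" .
  moreover have "card L = card (SIGMA w:{w \<in> V. deg V E w \<noteq> 2}. neighbors V E w)"
    using bij_betw_same_card[OF bij_betw_segment_start[OF sg ac]] by (simp add: L_def)
  moreover have "\<dots> = (\<Sum>w\<in>{w \<in> V. deg V E w \<noteq> 2}. deg V E w)"
    using sg finite_neighbors[OF sg] by (simp add: card_SigmaI deg_eq_card_neighbors simple_graph_def)
  ultimately show ?thesis by simp
qed

lemma num_segments_eq_if_deg_eq:
  assumes "simple_graph V E" "acyclic_graph V E" "simple_graph V E'" "acyclic_graph V E'"
    and "deg V E' = deg V E"
  shows "num_segments V E' = num_segments V E"
  using two_num_segments_eq_sum_deg[OF assms(1,2)] two_num_segments_eq_sum_deg[OF assms(3,4)] assms(5)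
  by simp

section \<open>Vertices of degree 4 in an M2-maximal tree\<close>

lemma path_leaves_induced_subgraph:
  assumes p: "is_path V E p" and "hd p \<in> S"
    and "(hd p, last p) \<notin> (adj {e \<in> E. e \<subseteq> S})\<^sup>*"
  obtains j where "Suc j < length p" "p ! j \<in> S" "p ! Suc j \<notin> S"
proof -
  have "p \<noteq> []" using p by (simp add: is_path_def)
  then have ends: "hd p = p ! 0" "last p = p ! (length p - 1)"
    by (simp_all add: hd_conv_nth last_conv_nth)
  have "\<exists>j. Suc j < length p \<and> p ! j \<in> S \<and> p ! Suc j \<notin> S"
  proof (rule ccontr)
    assume "\<nexists>j. Suc j < length p \<and> p ! j \<in> S \<and> p ! Suc j \<notin> S"
    then have step: "p ! j \<in> S \<Longrightarrow> Suc j < length p \<Longrightarrow> p ! Suc j \<in> S" for j by blast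
    have inS: "j < length p \<Longrightarrow> p ! j \<in> S" for j
    proof (induction j)
      case 0
      then show ?case using \<open>hd p \<in> S\<close> ends by simp
    next
      case (Suc j)
      then show ?case using step by simp
    qed
    have "{p ! k, p ! Suc k} \<in> {e \<in> E. e \<subseteq> S}" if "k < length p - 1" for k
      using is_path_edge[OF p, of k] inS[of k] inS[of "Suc k"] that by simp
    then have "(p ! 0, p ! (length p - 1)) \<in> (adj {e \<in> E. e \<subseteq> S})\<^sup>*"
      using reachable_along_path[of 0 "length p - 1" p] by blast
    then show False using assms(3) ends by simp
  qed
  then show ?thesis using that by blast
qed

lemma reachable_along_path_suffix:
  assumes p: "is_path V E p" and i: "i < length p" and R: "\<forall>e\<in>R. \<not> e \<subseteq> set (drop i p)"
  shows "(p ! i, last p) \<in> (adj (E - R))\<^sup>*"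
proof -
  have "p ! k \<in> set (drop i p)" if "i \<le> k" "k < length p" for k
    using nth_mem[of "k - i" "drop i p"] that by simp
  then have edges: "{p ! k, p ! Suc k} \<in> E - R" if "i \<le> k" "k < length p - 1" for k
    using is_path_edge[OF p, of k] R that by auto
  have "(p ! i, p ! (length p - 1)) \<in> (adj (E - R))\<^sup>*"
    using reachable_along_path[of i "length p - 1" p "E - R", OF edges] i by simp
  moreover have "p \<noteq> []" using i by auto
  ultimately show ?thesis by (simp add: last_conv_nth)
qed

lemma longest_path_between_components:
  assumes sg: "simple_graph V E" and conn: "connected_graph V E" and "S \<subseteq> V"
    and uw: "u \<in> S" "w \<in> S" "(u, w) \<notin> (adj {e \<in> E. e \<subseteq> S})\<^sup>*"
  obtains p where "is_path V E p" "hd p \<in> S" "last p \<in> S"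
    and "(hd p, last p) \<notin> (adj {e \<in> E. e \<subseteq> S})\<^sup>*"
    and "\<And>q. is_path V E q \<Longrightarrow> hd q \<in> S \<Longrightarrow> last q \<in> S \<Longrightarrow>
      (hd q, last q) \<notin> (adj {e \<in> E. e \<subseteq> S})\<^sup>* \<Longrightarrow> length q \<le> length p"
proof -
  define Q where "Q p \<longleftrightarrow> is_path V E p \<and> hd p \<in> S \<and> last p \<in> S \<and>
    (hd p, last p) \<notin> (adj {e \<in> E. e \<subseteq> S})\<^sup>*" for p
  have "(u, w) \<in> (adj E)\<^sup>*" using conn uw \<open>S \<subseteq> V\<close> unfolding connected_graph_iff_adj by blast
  then obtain p\<^sub>0 where "is_path V E p\<^sub>0" "hd p\<^sub>0 = u" "last p\<^sub>0 = w"
    using reachable_imp_path[OF sg] uw \<open>S \<subseteq> V\<close> by blast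
  then have "Q p\<^sub>0" using uw by (simp add: Q_def)
  moreover have "finite V" using sg by (simp add: simple_graph_def)
  moreover have "\<And>p. Q p \<Longrightarrow> is_path V E p" by (simp add: Q_def)
  ultimately obtain p where "Q p" "\<And>q. Q q \<Longrightarrow> length q \<le> length p"
    using maximal_path_exists by metis
  then show ?thesis by (intro that) (auto simp: Q_def)
qed

lemma improving_switch_if_deg4_disconnected:
  assumes ct: "chemical_tree V E" and S: "S = {v \<in> V. deg V E v = 4}"
    and uw: "u \<in> S" "w \<in> S" "(u, w) \<notin> (adj {e \<in> E. e \<subseteq> S})\<^sup>*"
  shows "\<exists>E'. chemical_tree V E' \<and> deg V E' = deg V E \<and> M2 V E < M2 V E'"
proof -
  let ?R = "(adj {e \<in> E. e \<subseteq> S})\<^sup>*"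
  have sg: "simple_graph V E" and ac: "acyclic_graph V E" and conn: "connected_graph V E"
    and dle: "\<And>w. w \<in> V \<Longrightarrow> deg V E w \<le> 4"
    using ct by (auto simp: chemical_tree_def is_tree_def)
  obtain p where pp: "is_path V E p" and hS: "hd p \<in> S" and lS: "last p \<in> S"
    and nR: "(hd p, last p) \<notin> ?R"
    and pmax: "\<And>q. is_path V E q \<Longrightarrow> hd q \<in> S \<Longrightarrow> last q \<in> S \<Longrightarrow>
      (hd q, last q) \<notin> ?R \<Longrightarrow> length q \<le> length p"
    using longest_path_between_components[OF sg conn _ uw] S by blast
  obtain j where j: "Suc j < length p" "p ! j \<in> S" "p ! Suc j \<notin> S"
    using path_leaves_induced_subgraph[OF pp hS nR] by blast
  define a b v where "a = p ! j" and "b = p ! Suc j" and "v = last p"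
  have "deg V E v = 4" using lS S v_def by simp
  then obtain y where vy: "{v, y} \<in> E" and y: "y \<notin> set p" "is_path V E (p @ [y])"
    using acyclic_path_extend[OF sg ac pp] v_def by auto
  have "y \<notin> S"
  proof
    assume "y \<in> S"
    \<comment> \<open>then p @ [y] would be a longer path between two components\<close>
    moreover have "(hd p, y) \<notin> ?R"
    proof
      assume "(hd p, y) \<in> ?R"
      moreover have "(y, v) \<in> adj {e \<in> E. e \<subseteq> S}"
        using vy \<open>y \<in> S\<close> lS v_def by (simp add: adj_def insert_commute)
      ultimately show False using nR v_def by (meson rtrancl_into_rtrancl)
    qed
    ultimately have "length (p @ [y]) \<le> length p" using pmax[OF y(2)] hS pp by (auto simp: is_path_def)
    then show False by simp
  qed
  have "a \<in> set (take (Suc j) p)" using j(1) by (simp add: a_def take_Suc_conv_app_nth)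
  then have "a \<notin> set (drop (Suc j) p)"
    using set_take_disj_set_drop_if_distinct[OF is_path_distinct[OF pp], of "Suc j" "Suc j"] by blast
  then have "\<forall>e\<in>{{a, b}, {v, y}}. \<not> e \<subseteq> set (drop (Suc j) p)"
    using y(1) by (auto dest: in_set_dropD)
  then have "(b, v) \<in> (adj (E - {{a, b}, {v, y}}))\<^sup>*"
    using reachable_along_path_suffix[OF pp j(1)] b_def v_def by simp
  moreover have "{a, b} \<in> E" using is_path_edge[OF pp j(1)] a_def b_def by simp
  moreover have "deg V E a = 4" "deg V E v = 4" using j(2) lS S a_def v_def by auto
  moreover have "b \<in> V" "y \<in> V"
    using is_path_nth_mem[OF pp] j(1) simple_graph_edgeD[OF sg vy] b_def by auto
  then have "deg V E b < 4" "deg V E y < 4" using dle j(3) \<open>y \<notin> S\<close> S b_def by fastforce+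
  ultimately show ?thesis using edge_switch_increases_M2[OF ct _ vy] by blast
qed

lemma connected_deg4_subgraph_if_M2_maximal:
  assumes ct: "chemical_tree V E" and S: "S = {v \<in> V. deg V E v = 4}"
    and max: "\<And>E'. chemical_tree V E' \<Longrightarrow> num_segments V E' = num_segments V E \<Longrightarrow>
      M2 V E' \<le> M2 V E"
  shows "connected_graph S {e \<in> E. e \<subseteq> S}"
  unfolding connected_graph_iff_adj
proof (intro ballI, rule ccontr)
  fix u w assume "u \<in> S" "w \<in> S" "(u, w) \<notin> (adj {e \<in> E. e \<subseteq> S})\<^sup>*"
  then obtain E' where E': "chemical_tree V E'" "deg V E' = deg V E" "M2 V E < M2 V E'"
    using improving_switch_if_deg4_disconnected[OF ct S] by blast
  moreover have "num_segments V E' = num_segments V E"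
    using num_segments_eq_if_deg_eq[of V E E'] E'(1,2) ct by (simp add: chemical_tree_def is_tree_def)
  ultimately show False using max by (meson not_le)
qed

lemma max_degree_attained:
  assumes "simple_graph V E" and "V \<noteq> {}"
  shows "\<exists>v\<in>V. deg V E v = max_degree V E"
proof -
  have "Max (deg V E ` V) \<in> deg V E ` V"
    using assms by (intro Max_in) (auto simp: simple_graph_def)
  then show ?thesis by (auto simp: max_degree_def)
qed

theorem corollary1:
  fixes n k :: nat and V :: "nat set" and E :: "nat set set"
  assumes "3 \<le> k" and "k \<le> n - 1"
    and "(V, E) \<in> CT n k"
    and "\<forall>V' E'. (V', E') \<in> CT n k \<longrightarrow> M2 V' E' \<le> M2 V E"
    and "max_degree V E = 4"
  shows "is_tree {v \<in> V. deg V E v = 4} {e \<in> E. e \<subseteq> {v \<in> V. deg V E v = 4}}"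
proof -
  define S where "S = {v \<in> V. deg V E v = 4}"
  have ct: "chemical_tree V E" and "card V = n" "num_segments V E = k"
    using assms(3) by (auto simp: CT_def)
  then have sg: "simple_graph V E" and ac: "acyclic_graph V E" and "V \<noteq> {}"
    by (auto simp: chemical_tree_def is_tree_def)
  have "S \<noteq> {}" using max_degree_attained[OF sg \<open>V \<noteq> {}\<close>] assms(5) by (auto simp: S_def)
  moreover have "simple_graph S {e \<in> E. e \<subseteq> S}"
    using simple_graph_induced[OF sg] by (simp add: S_def)
  moreover have "acyclic_graph S {e \<in> E. e \<subseteq> S}"
    using acyclic_graph_subgraph[OF ac] by (auto simp: S_def)
  moreover have "connected_graph S {e \<in> E. e \<subseteq> S}"
  proof (rule connected_deg4_subgraph_if_M2_maximal[OF ct S_def])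
    fix E' assume "chemical_tree V E'" "num_segments V E' = num_segments V E"
    then show "M2 V E' \<le> M2 V E"
      using assms(4) \<open>card V = n\<close> \<open>num_segments V E = k\<close> by (simp add: CT_def)
  qed
  ultimately show ?thesis by (simp add: is_tree_def S_def)
qed

end
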